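(* Let $a=a(\hbar)$, $\hbar\in(0,1]$, be a bounded family in $S^0(\mathbb R^q\times\mathbb R^q;L^2(\mathbb R_+),L^2(\mathbb R_+))$, and let $a_\hbar(\hbar;y,\eta)=\kappa_\hbar^{-1}a(\hbar;y,\hbar\eta)\kappa_\hbar$. Then the family $a_\hbar$, $\hbar\in(0,1]$, is also bounded in $S^0(\mathbb R^q\times\mathbb R^q;L^2(\mathbb R_+),L^2(\mathbb R_+))$, and its seminorms can be estimated in terms of those of $a$.
   Context: The group action on $L^2(\mathbb R_+)$ is $(\kappa_\lambda u)(x)=\lambda^{1/2}u(\lambda x)$, $\lambda>0$ (unitary). $S^\mu(\mathbb R^q\times\mathbb R^q;E,F)$, for Banach spaces $E,F$ with strongly continuous $\mathbb R_+$-actions $\kappa,\tilde\kappa$, is the Fréchet space of $a\in\mathcal C^\infty(\mathbb R^q\times\mathbb R^q,\mathcal L(E,F))$ with seminorms $\sup_{y,\eta}\langle\eta\rangle^{-\mu+|\alpha|}\|\tilde\kappa_{\langle\eta\rangle^{-1}}D^\alpha_\eta D^\beta_ya(y,\eta)\kappa_{\langle\eta\rangle}\|$ finite, where $\langle\eta\rangle$ is a smooth positive function equal to $|\eta|$ for $|\eta|\ge1$. A family is bounded if each seminorm is bounded uniformly in $\hbar$. *)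

theory Defs
  imports "HOL-Analysis.Analysis"
begin

text \<open>A real normed space 'h is identified with L^2(R_+) (complex valued) through a
representation map U: each element x is represented by a measurable function U x on
the reals, only its values on (0,inf) matter, up to a.e. equality; U is linear a.e.,
isometric for the L^2 norm, and onto the square integrable functions.\<close>

definition L2_model :: "('h::real_normed_vector \<Rightarrow> real \<Rightarrow> complex) \<Rightarrow> bool" where
  "L2_model U \<longleftrightarrow>
     (\<forall>x. U x \<in> borel_measurable lborel
          \<and> set_integrable lborel {0<..} (\<lambda>t. (cmod (U x t))\<^sup>2)
          \<and> (norm x)\<^sup>2 = (LINT t:{0<..}|lborel. (cmod (U x t))\<^sup>2))
   \<and> (\<forall>x y. AE t in lborel. t > 0 \<longrightarrow> U (x + y) t = U x t + U y t)
   \<and> (\<forall>c x. AE t in lborel. t > 0 \<longrightarrow> U (c *\<^sub>R x) t = complex_of_real c * U x t)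
   \<and> (\<forall>f::real \<Rightarrow> complex. f \<in> borel_measurable lborel
          \<and> set_integrable lborel {0<..} (\<lambda>t. (cmod (f t))\<^sup>2)
          \<longrightarrow> (\<exists>x. AE t in lborel. t > 0 \<longrightarrow> U x t = f t))"

definition kappa :: "('h::real_normed_vector \<Rightarrow> real \<Rightarrow> complex) \<Rightarrow> real \<Rightarrow> 'h \<Rightarrow> 'h" where
  "kappa U lam x = (THE z. AE t in lborel. t > 0 \<longrightarrow>
       U z t = complex_of_real (sqrt lam) * U x (lam * t))"

definition kappaL :: "('h::real_normed_vector \<Rightarrow> real \<Rightarrow> complex) \<Rightarrow> real \<Rightarrow> 'h \<Rightarrow>\<^sub>L 'h" where
  "kappaL U lam = Blinfun (kappa U lam)"

definition dirderiv :: "'a::real_normed_vector \<Rightarrow> ('a \<Rightarrow> 'b::real_normed_vector) \<Rightarrow> 'a \<Rightarrow> 'b" where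
  "dirderiv v f z = vector_derivative (\<lambda>t. f (z + t *\<^sub>R v)) (at 0)"

fun iter_deriv :: "'a::real_normed_vector list \<Rightarrow> ('a \<Rightarrow> 'b::real_normed_vector) \<Rightarrow> 'a \<Rightarrow> 'b" where
  "iter_deriv [] f = f"
| "iter_deriv (v # vs) f = dirderiv v (iter_deriv vs f)"

definition smooth_fun :: "('a::euclidean_space \<Rightarrow> 'b::real_normed_vector) \<Rightarrow> bool" where
  "smooth_fun f \<longleftrightarrow> (\<forall>vs. set vs \<subseteq> Basis \<longrightarrow>
      continuous_on UNIV (iter_deriv vs f)
      \<and> (\<forall>v\<in>Basis. \<forall>z. (\<lambda>t. iter_deriv vs f (z + t *\<^sub>R v)) differentiable (at 0)))"

definition bracket_fun :: "('a::euclidean_space \<Rightarrow> real) \<Rightarrow> bool" where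
  "bracket_fun br \<longleftrightarrow> smooth_fun br \<and> (\<forall>\<eta>. br \<eta> > 0) \<and> (\<forall>\<eta>. norm \<eta> \<ge> 1 \<longrightarrow> br \<eta> = norm \<eta>)"

text \<open>D^alpha_eta D^beta_y, with alpha, beta given as lists of basis directions.\<close>
definition Dsym :: "('q::finite) list \<Rightarrow> 'q list \<Rightarrow> ((real^'q) \<times> (real^'q) \<Rightarrow> 'b::real_normed_vector)
     \<Rightarrow> (real^'q) \<times> (real^'q) \<Rightarrow> 'b" where
  "Dsym al be f = iter_deriv (map (\<lambda>i. (0, axis i 1)) al @ map (\<lambda>i. (axis i 1, 0)) be) f"

definition sym_est :: "('h::real_normed_vector \<Rightarrow> real \<Rightarrow> complex) \<Rightarrow> (real^'q::finite \<Rightarrow> real) \<Rightarrow> real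
     \<Rightarrow> 'q list \<Rightarrow> 'q list \<Rightarrow> ((real^'q) \<times> (real^'q) \<Rightarrow> 'h \<Rightarrow>\<^sub>L 'h) \<Rightarrow> real \<Rightarrow> bool" where
  "sym_est U br \<mu> al be b C \<longleftrightarrow> (\<forall>y \<eta>.
      br \<eta> powr (real (length al) - \<mu>) *
        norm (kappaL U (1 / br \<eta>) o\<^sub>L Dsym al be b (y, \<eta>) o\<^sub>L kappaL U (br \<eta>)) \<le> C)"

definition symbol_class :: "('h::real_normed_vector \<Rightarrow> real \<Rightarrow> complex) \<Rightarrow> (real^'q::finite \<Rightarrow> real) \<Rightarrow> real
     \<Rightarrow> ((real^'q) \<times> (real^'q) \<Rightarrow> 'h \<Rightarrow>\<^sub>L 'h) \<Rightarrow> bool" where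
  "symbol_class U br \<mu> b \<longleftrightarrow> smooth_fun b \<and> (\<forall>al be. \<exists>C. sym_est U br \<mu> al be b C)"

definition bounded_family :: "('h::real_normed_vector \<Rightarrow> real \<Rightarrow> complex) \<Rightarrow> (real^'q::finite \<Rightarrow> real) \<Rightarrow> real
     \<Rightarrow> (real \<Rightarrow> (real^'q) \<times> (real^'q) \<Rightarrow> 'h \<Rightarrow>\<^sub>L 'h) \<Rightarrow> bool" where
  "bounded_family U br \<mu> A \<longleftrightarrow> (\<forall>h\<in>{0<..1}. symbol_class U br \<mu> (A h))
     \<and> (\<forall>al be. \<exists>C. \<forall>h\<in>{0<..1}. sym_est U br \<mu> al be (A h) C)"

text \<open>b_hbar(y,eta) = kappa_hbar^{-1} b(y, hbar eta) kappa_hbar, with kappa_hbar^{-1} = kappa_{1/hbar}.\<close>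
definition rescale :: "('h::real_normed_vector \<Rightarrow> real \<Rightarrow> complex) \<Rightarrow> real
     \<Rightarrow> ((real^'q::finite) \<times> (real^'q) \<Rightarrow> 'h \<Rightarrow>\<^sub>L 'h) \<Rightarrow> (real^'q) \<times> (real^'q) \<Rightarrow> 'h \<Rightarrow>\<^sub>L 'h" where
  "rescale U h b = (\<lambda>(y, \<eta>). kappaL U (1 / h) o\<^sub>L b (y, h *\<^sub>R \<eta>) o\<^sub>L kappaL U h)"

end

theory Submission
  imports Defs
begin

text \<open>Differentiating b(y, h\<eta>) in \<eta> produces one factor h per \<eta>-derivative. The
dilations form a group of isometries, so conjugating first by \<kappa>_h and then by \<kappa>_<\<eta>> is
conjugation by \<kappa>_(h<\<eta>>), which differs from conjugation by \<kappa>_<h\<eta>> only by a further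
isometric conjugation. The weight (h<\<eta>>)^|\<alpha>| is then at most c^|\<alpha>| <h\<eta>>^|\<alpha>|, since
h<\<eta>> \<le> c<h\<eta>> for 0 < h \<le> 1: both sides are multiples of h|\<eta>| once h|\<eta>| \<ge> 1, and
otherwise the bracket is bounded above and below on the unit ball.\<close>

definition represents :: "('h::real_normed_vector \<Rightarrow> real \<Rightarrow> complex) \<Rightarrow> 'h \<Rightarrow> (real \<Rightarrow> complex) \<Rightarrow> bool" where
  "represents U x f \<longleftrightarrow> (AE t in lborel. t > 0 \<longrightarrow> U x t = f t)"

lemma AE_lborel_scale:
  fixes lam :: real
  assumes lam: "lam > 0" and P: "AE s in lborel. Q s"
  shows "AE t in lborel. Q (lam * t)"
proof -
  from P obtain N where N: "{s \<in> space lborel. \<not> Q s} \<subseteq> N" "N \<in> sets lborel" "emeasure lborel N = 0"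
    by (auto elim!: AE_E)
  have "AE s in lborel. s \<notin> N" using N by (intro AE_I[of _ _ N]) auto
  hence "AE s in density lborel (\<lambda>_. inverse \<bar>lam\<bar>). s \<notin> N"
    by (subst AE_density) (auto elim: AE_mp)
  hence "AE s in distr lborel borel ((*) lam). s \<notin> N"
    by (subst lborel_distr_mult) (use lam in auto)
  hence "AE t in lborel. lam * t \<notin> N"
    using N(2) by (subst (asm) AE_distr_iff) auto
  thus ?thesis using N(1) by (auto elim!: AE_mp)
qed

lemma AE_lborel_scale_pos:
  fixes lam :: real
  assumes lam: "lam > 0" and P: "AE s in lborel. s > 0 \<longrightarrow> Q s"
  shows "AE t in lborel. t > 0 \<longrightarrow> Q (lam * t)"
  using AE_lborel_scale[OF lam P] lam by (auto elim!: AE_mp)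

lemma L2_modelD:
  assumes "L2_model U"
  shows "U x \<in> borel_measurable lborel"
    and "set_integrable lborel {0<..} (\<lambda>t. (cmod (U x t))\<^sup>2)"
    and "(norm x)\<^sup>2 = (LINT t:{0<..}|lborel. (cmod (U x t))\<^sup>2)"
    and "AE t in lborel. t > 0 \<longrightarrow> U (x + y) t = U x t + U y t"
    and "AE t in lborel. t > 0 \<longrightarrow> U (c *\<^sub>R x) t = complex_of_real c * U x t"
    and "f \<in> borel_measurable lborel \<Longrightarrow> set_integrable lborel {0<..} (\<lambda>t. (cmod (f t))\<^sup>2)
          \<Longrightarrow> \<exists>x. represents U x f"
  using assms unfolding L2_model_def represents_def by blast+

lemma L2_model_norm_represents:
  assumes M: "L2_model U" and r: "represents U z f" and fm[measurable]: "f \<in> borel_measurable lborel"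
  shows "(norm z)\<^sup>2 = (LINT t:{0<..}|lborel. (cmod (f t))\<^sup>2)"
proof -
  have [measurable]: "U z \<in> borel_measurable lborel" by (rule L2_modelD(1)[OF M])
  have "(norm z)\<^sup>2 = (LINT t:{0<..}|lborel. (cmod (U z t))\<^sup>2)" by (rule L2_modelD(3)[OF M])
  also have "\<dots> = (LINT t:{0::real<..}|lborel. (cmod (f t))\<^sup>2)"
    by (rule set_lebesgue_integral_cong_AE) (use r in \<open>auto simp: represents_def elim!: AE_mp\<close>)
  finally show ?thesis .
qed

lemma represents_unique:
  assumes M: "L2_model U" and "represents U x f" "represents U z f"
  shows "x = z"
proof -
  have "represents U (x - z) (\<lambda>_. 0)"
    using L2_modelD(4)[OF M, of x "(-1) *\<^sub>R z"] L2_modelD(5)[OF M, of "-1" z] assms(2,3)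
    unfolding represents_def by (auto elim!: AE_mp)
  hence "(norm (x - z))\<^sup>2 = 0"
    using L2_model_norm_represents[OF M] by (simp add: set_lebesgue_integral_def)
  thus ?thesis by simp
qed

lemma L2_dilation:
  fixes lam :: real and g :: "real \<Rightarrow> complex"
  assumes lam: "lam > 0" and gm: "g \<in> borel_measurable lborel"
    and gi: "set_integrable lborel {0<..} (\<lambda>t. (cmod (g t))\<^sup>2)"
  shows "(\<lambda>t. complex_of_real (sqrt lam) * g (lam * t)) \<in> borel_measurable lborel"
    and "set_integrable lborel {0<..} (\<lambda>t. (cmod (complex_of_real (sqrt lam) * g (lam * t)))\<^sup>2)"
    and "(LINT t:{0<..}|lborel. (cmod (complex_of_real (sqrt lam) * g (lam * t)))\<^sup>2)
         = (LINT t:{0<..}|lborel. (cmod (g t))\<^sup>2)"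
proof -
  show "(\<lambda>t. complex_of_real (sqrt lam) * g (lam * t)) \<in> borel_measurable lborel"
    using gm by measurable
  define G where "G t = indicator {0<..} t *\<^sub>R (cmod (g t))\<^sup>2" for t :: real
  have GI: "integrable lborel G" using gi unfolding G_def set_integrable_def by simp
  have "indicator {0<..} (lam * t) = (indicator {0<..} t :: real)" for t
    using lam by (auto simp: indicator_def zero_less_mult_iff)
  hence eq: "indicator {0<..} t *\<^sub>R (cmod (complex_of_real (sqrt lam) * g (lam * t)))\<^sup>2
      = lam * G (0 + lam * t)" for t
    using lam by (simp add: G_def norm_mult power_mult_distrib)
  have "integrable lborel (\<lambda>t. G (0 + lam * t))"
    using lborel_integrable_real_affine[OF GI, of lam 0] lam by simp
  thus "set_integrable lborel {0<..} (\<lambda>t. (cmod (complex_of_real (sqrt lam) * g (lam * t)))\<^sup>2)"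
    unfolding set_integrable_def eq by simp
  have "(LINT t:{0<..}|lborel. (cmod (complex_of_real (sqrt lam) * g (lam * t)))\<^sup>2)
      = lam * (\<integral>t. G (0 + lam * t) \<partial>lborel)"
    unfolding set_lebesgue_integral_def eq by simp
  also have "\<dots> = (\<integral>t. G t \<partial>lborel)"
    using lborel_integral_real_affine[of lam G 0] lam by simp
  finally show "(LINT t:{0<..}|lborel. (cmod (complex_of_real (sqrt lam) * g (lam * t)))\<^sup>2)
         = (LINT t:{0<..}|lborel. (cmod (g t))\<^sup>2)"
    unfolding set_lebesgue_integral_def G_def .
qed

lemma kappa_represents:
  assumes M: "L2_model U" and lam: "lam > 0"
  shows "represents U (kappa U lam x) (\<lambda>t. complex_of_real (sqrt lam) * U x (lam * t))"
proof -
  note dil = L2_dilation[OF lam L2_modelD(1,2)[OF M]]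
  obtain z where z: "represents U z (\<lambda>t. complex_of_real (sqrt lam) * U x (lam * t))"
    using L2_modelD(6)[OF M dil(1,2)] by blast
  have "kappa U lam x = z"
    unfolding kappa_def
  proof (rule the_equality)
    show "AE t in lborel. 0 < t \<longrightarrow> U z t = complex_of_real (sqrt lam) * U x (lam * t)"
      using z unfolding represents_def .
    fix w assume "AE t in lborel. 0 < t \<longrightarrow> U w t = complex_of_real (sqrt lam) * U x (lam * t)"
    thus "w = z" using represents_unique[OF M _ z] unfolding represents_def by blast
  qed
  thus ?thesis using z by simp
qed

lemma norm_kappa:
  assumes M: "L2_model U" and lam: "lam > 0"
  shows "norm (kappa U lam x) = norm x"
proof -
  note dil = L2_dilation[OF lam L2_modelD(1,2)[OF M]]
  have "(norm (kappa U lam x))\<^sup>2 = (norm x)\<^sup>2"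
    using L2_model_norm_represents[OF M kappa_represents[OF M lam] dil(1)] dil(3) L2_modelD(3)[OF M]
    by simp
  thus ?thesis by (simp add: power2_eq_iff_nonneg)
qed

lemma kappa_add:
  assumes M: "L2_model U" and lam: "lam > 0"
  shows "kappa U lam (x + y) = kappa U lam x + kappa U lam y"
proof -
  have "represents U (kappa U lam x + kappa U lam y) (\<lambda>t. complex_of_real (sqrt lam) * U (x + y) (lam * t))"
    using L2_modelD(4)[OF M, of "kappa U lam x" "kappa U lam y"]
      kappa_represents[OF M lam, of x] kappa_represents[OF M lam, of y]
      AE_lborel_scale_pos[OF lam L2_modelD(4)[OF M, of x y]]
    unfolding represents_def by (auto elim!: AE_mp simp: algebra_simps)
  thus ?thesis using represents_unique[OF M kappa_represents[OF M lam]] by blast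
qed

lemma kappa_scaleR:
  assumes M: "L2_model U" and lam: "lam > 0"
  shows "kappa U lam (c *\<^sub>R x) = c *\<^sub>R kappa U lam x"
proof -
  have "represents U (c *\<^sub>R kappa U lam x) (\<lambda>t. complex_of_real (sqrt lam) * U (c *\<^sub>R x) (lam * t))"
    using L2_modelD(5)[OF M, of c "kappa U lam x"] kappa_represents[OF M lam, of x]
      AE_lborel_scale_pos[OF lam L2_modelD(5)[OF M, of c x]]
    unfolding represents_def by (auto elim!: AE_mp simp: algebra_simps)
  thus ?thesis using represents_unique[OF M kappa_represents[OF M lam]] by blast
qed

lemma kappa_kappa:
  assumes M: "L2_model U" and lam: "lam > 0" and mu: "mu > 0"
  shows "kappa U mu (kappa U lam x) = kappa U (lam * mu) x"
proof -
  have "represents U (kappa U mu (kappa U lam x)) (\<lambda>t. complex_of_real (sqrt (lam * mu)) * U x (lam * mu * t))"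
    using kappa_represents[OF M mu, of "kappa U lam x"]
      AE_lborel_scale_pos[OF mu kappa_represents[OF M lam, of x, unfolded represents_def]]
    unfolding represents_def by (auto elim!: AE_mp simp: algebra_simps real_sqrt_mult)
  thus ?thesis using represents_unique[OF M kappa_represents[OF M, of "lam * mu" x]] lam mu by simp
qed

lemma bounded_linear_kappa:
  assumes M: "L2_model U" and lam: "lam > 0"
  shows "bounded_linear (kappa U lam)"
  by (rule bounded_linear_intro[of _ 1])
     (auto simp: kappa_add[OF M lam] kappa_scaleR[OF M lam] norm_kappa[OF M lam])

lemma kappaL_apply:
  assumes M: "L2_model U" and lam: "lam > 0"
  shows "blinfun_apply (kappaL U lam) = kappa U lam"
  unfolding kappaL_def by (rule bounded_linear_Blinfun_apply[OF bounded_linear_kappa[OF M lam]])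

lemma norm_kappaL_le:
  assumes M: "L2_model U" and lam: "lam > 0"
  shows "norm (kappaL U lam) \<le> 1"
  by (rule norm_blinfun_bound) (auto simp: kappaL_apply[OF M lam] norm_kappa[OF M lam])

definition dilation_conj :: "('h::real_normed_vector \<Rightarrow> real \<Rightarrow> complex) \<Rightarrow> real \<Rightarrow> ('h \<Rightarrow>\<^sub>L 'h) \<Rightarrow> 'h \<Rightarrow>\<^sub>L 'h" where
  "dilation_conj U lam X = kappaL U (1 / lam) o\<^sub>L X o\<^sub>L kappaL U lam"

lemma bounded_linear_dilation_conj: "bounded_linear (dilation_conj U lam)"
  unfolding dilation_conj_def
  by (intro bounded_linear_compose[OF bounded_bilinear.bounded_linear_left[OF bounded_bilinear_blinfun_compose]]
      bounded_bilinear.bounded_linear_right[OF bounded_bilinear_blinfun_compose])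

lemma dilation_conj_dilation_conj:
  assumes M: "L2_model U" and lam: "lam > 0" and mu: "mu > 0"
  shows "dilation_conj U lam (dilation_conj U mu X) = dilation_conj U (mu * lam) X"
  using lam mu
  by (intro blinfun_eqI) (simp add: dilation_conj_def kappaL_apply[OF M] kappa_kappa[OF M] mult.commute)

lemma norm_dilation_conj_le:
  assumes M: "L2_model U" and lam: "lam > 0"
  shows "norm (dilation_conj U lam X) \<le> norm X"
proof -
  have "norm (dilation_conj U lam X) \<le> norm (kappaL U (1 / lam)) * norm X * norm (kappaL U lam)"
    unfolding dilation_conj_def
    by (meson norm_blinfun_compose mult_right_mono norm_ge_zero order_trans)
  also have "\<dots> \<le> 1 * norm X * 1"
    using norm_kappaL_le[OF M] lam by (intro mult_mono) auto
  finally show ?thesis by simp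
qed

definition fibre_scale :: "real \<Rightarrow> ('a::real_vector \<times> 'a) \<Rightarrow> 'a \<times> 'a" where
  "fibre_scale h z = (fst z, h *\<^sub>R snd z)"

definition fibre_factor :: "real \<Rightarrow> ('a::real_vector \<times> 'a) \<Rightarrow> real" where
  "fibre_factor h v = (if fst v = 0 then h else 1)"

definition fibre_count :: "('a::real_vector \<times> 'a) list \<Rightarrow> nat" where
  "fibre_count vs = length (filter (\<lambda>v. fst v = 0) vs)"

lemma fibre_scale_add_Basis:
  fixes v :: "'a::euclidean_space \<times> 'a"
  assumes "v \<in> Basis"
  shows "fibre_scale h (z + t *\<^sub>R v) = fibre_scale h z + (fibre_factor h v * t) *\<^sub>R v"
proof -
  obtain u where u: "u \<in> Basis" "v = (u, 0) \<or> v = (0, u)"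
    using assms unfolding Basis_prod_def by auto
  hence "u \<noteq> 0" by auto
  thus ?thesis using u unfolding fibre_scale_def fibre_factor_def
    by (cases z) (auto simp: algebra_simps)
qed

lemma has_vector_derivative_iter_deriv_fibre_scale:
  fixes b :: "'a::euclidean_space \<times> 'a \<Rightarrow> 'b::real_normed_vector"
    and L :: "'b \<Rightarrow> 'c::real_normed_vector"
  assumes L: "bounded_linear L" and b: "smooth_fun b" and vs: "set vs \<subseteq> Basis" and v: "v \<in> Basis"
    and IH: "\<And>z. iter_deriv vs G z = (h ^ fibre_count vs) *\<^sub>R L (iter_deriv vs b (fibre_scale h z))"
  shows "((\<lambda>t. iter_deriv vs G (z + t *\<^sub>R v)) has_vector_derivative
           (h ^ fibre_count (v # vs)) *\<^sub>R L (iter_deriv (v # vs) b (fibre_scale h z))) (at 0)"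
proof -
  define \<psi> where "\<psi> s = iter_deriv vs b (fibre_scale h z + s *\<^sub>R v)" for s
  define D where "D = iter_deriv (v # vs) b (fibre_scale h z)"
  have "\<psi> differentiable (at 0)" using b vs v unfolding smooth_fun_def \<psi>_def by blast
  hence "(\<psi> has_vector_derivative D) (at 0)"
    unfolding D_def \<psi>_def by (simp add: dirderiv_def vector_derivative_works)
  moreover have "((\<lambda>t. fibre_factor h v * t) has_vector_derivative fibre_factor h v) (at 0)"
    by (auto intro!: derivative_eq_intros simp: has_real_derivative_iff_has_vector_derivative[symmetric])
  ultimately have "((\<psi> \<circ> (\<lambda>t. fibre_factor h v * t)) has_vector_derivative (fibre_factor h v *\<^sub>R D)) (at 0)"
    by (intro vector_diff_chain_at) simp_all
  moreover have "bounded_linear (\<lambda>x. (h ^ fibre_count vs) *\<^sub>R L x)"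
    using L by (intro bounded_linear_compose[OF bounded_linear_scaleR_right L])
  ultimately have "((\<lambda>t. (h ^ fibre_count vs) *\<^sub>R L ((\<psi> \<circ> (\<lambda>t. fibre_factor h v * t)) t))
      has_vector_derivative (h ^ fibre_count vs) *\<^sub>R L (fibre_factor h v *\<^sub>R D)) (at 0)"
    by (rule bounded_linear.has_vector_derivative[rotated])
  moreover have "(\<lambda>t. (h ^ fibre_count vs) *\<^sub>R L ((\<psi> \<circ> (\<lambda>t. fibre_factor h v * t)) t))
      = (\<lambda>t. iter_deriv vs G (z + t *\<^sub>R v))"
    by (simp add: IH \<psi>_def fibre_scale_add_Basis[OF v])
  moreover have "(h ^ fibre_count vs) *\<^sub>R L (fibre_factor h v *\<^sub>R D) = (h ^ fibre_count (v # vs)) *\<^sub>R L D"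
    by (simp add: fibre_count_def fibre_factor_def linear_simps[OF L])
  ultimately show ?thesis unfolding D_def by simp
qed

lemma iter_deriv_fibre_scale:
  fixes b :: "'a::euclidean_space \<times> 'a \<Rightarrow> 'b::real_normed_vector"
    and L :: "'b \<Rightarrow> 'c::real_normed_vector"
  assumes L: "bounded_linear L" and b: "smooth_fun b" and vs: "set vs \<subseteq> Basis"
  shows "iter_deriv vs (\<lambda>z. L (b (fibre_scale h z))) z
    = (h ^ fibre_count vs) *\<^sub>R L (iter_deriv vs b (fibre_scale h z))"
  using vs
proof (induction vs arbitrary: z)
  case Nil
  then show ?case by (simp add: fibre_count_def)
next
  case (Cons v vs)
  hence "((\<lambda>t. iter_deriv vs (\<lambda>z. L (b (fibre_scale h z))) (z + t *\<^sub>R v)) has_vector_derivative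
           (h ^ fibre_count (v # vs)) *\<^sub>R L (iter_deriv (v # vs) b (fibre_scale h z))) (at 0)"
    by (intro has_vector_derivative_iter_deriv_fibre_scale[OF L b]) auto
  thus ?case by (simp add: dirderiv_def vector_derivative_at)
qed

lemma smooth_fun_fibre_scale:
  fixes b :: "'a::euclidean_space \<times> 'a \<Rightarrow> 'b::real_normed_vector"
    and L :: "'b \<Rightarrow> 'c::real_normed_vector"
  assumes L: "bounded_linear L" and b: "smooth_fun b"
  shows "smooth_fun (\<lambda>z. L (b (fibre_scale h z)))"
  unfolding smooth_fun_def
proof (intro allI impI conjI ballI)
  fix vs :: "('a \<times> 'a) list" assume vs: "set vs \<subseteq> Basis"
  have "continuous_on UNIV (iter_deriv vs b)" using b vs unfolding smooth_fun_def by blast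
  moreover have "continuous_on UNIV (fibre_scale h :: 'a \<times> 'a \<Rightarrow> _)"
    unfolding fibre_scale_def by (intro continuous_intros)
  ultimately have "continuous_on UNIV (\<lambda>z. iter_deriv vs b (fibre_scale h z))"
    by (rule continuous_on_compose2) auto
  hence "continuous_on UNIV (\<lambda>z. (h ^ fibre_count vs) *\<^sub>R L (iter_deriv vs b (fibre_scale h z)))"
    by (intro continuous_on_scaleR continuous_on_const bounded_linear.continuous_on[OF L])
  thus "continuous_on UNIV (iter_deriv vs (\<lambda>z. L (b (fibre_scale h z))))"
    using iter_deriv_fibre_scale[OF L b vs] by simp
  fix v :: "'a \<times> 'a" and z assume v: "v \<in> Basis"
  show "(\<lambda>t. iter_deriv vs (\<lambda>z. L (b (fibre_scale h z))) (z + t *\<^sub>R v)) differentiable at 0"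
    by (rule differentiableI_vector[OF has_vector_derivative_iter_deriv_fibre_scale[OF L b vs v
          iter_deriv_fibre_scale[OF L b vs]]])
qed

lemma rescale_eq_dilation_conj: "rescale U h b = (\<lambda>z. dilation_conj U h (b (fibre_scale h z)))"
  unfolding rescale_def dilation_conj_def fibre_scale_def by (auto simp: case_prod_beta)

lemma Dsym_rescale:
  fixes al be :: "'q::finite list"
  assumes b: "smooth_fun b"
  shows "Dsym al be (rescale U h b) (y, \<eta>) = (h ^ length al) *\<^sub>R dilation_conj U h (Dsym al be b (y, h *\<^sub>R \<eta>))"
proof -
  let ?vs = "map (\<lambda>i. (0, axis i 1)) al @ map (\<lambda>i. (axis i 1, 0)) be :: ((real^'q) \<times> (real^'q)) list"
  have vs: "set ?vs \<subseteq> Basis" and count: "fibre_count ?vs = length al"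
    unfolding Basis_prod_def fibre_count_def by (auto simp: filter_map o_def)
  show ?thesis
    unfolding Dsym_def rescale_eq_dilation_conj
    by (subst iter_deriv_fibre_scale[OF bounded_linear_dilation_conj b vs]) (simp add: count fibre_scale_def)
qed

lemma smooth_fun_rescale: "smooth_fun b \<Longrightarrow> smooth_fun (rescale U h b)"
  unfolding rescale_eq_dilation_conj by (rule smooth_fun_fibre_scale[OF bounded_linear_dilation_conj])

lemma bracket_fun_scale_bound:
  fixes br :: "real^'q::finite \<Rightarrow> real"
  assumes br: "bracket_fun br"
  obtains c where "c \<ge> 1" "\<And>h \<eta>. 0 < h \<Longrightarrow> h \<le> 1 \<Longrightarrow> h * br \<eta> \<le> c * br (h *\<^sub>R \<eta>)"
proof -
  have pos: "\<And>\<eta>. br \<eta> > 0" and big: "\<And>\<eta>. norm \<eta> \<ge> 1 \<Longrightarrow> br \<eta> = norm \<eta>"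
    using br unfolding bracket_fun_def by auto
  have "continuous_on UNIV br"
    using br unfolding bracket_fun_def smooth_fun_def by (metis empty_subsetI iter_deriv.simps(1) list.set(1))
  hence cont: "continuous_on (cball 0 1) br" using continuous_on_subset by blast
  obtain x1 where x1: "x1 \<in> cball 0 1" "\<And>y. y \<in> cball 0 1 \<Longrightarrow> br x1 \<le> br y"
    using continuous_attains_inf[of "cball (0::real^'q) 1" br] cont by auto
  obtain x2 where x2: "x2 \<in> cball 0 1" "\<And>y. y \<in> cball 0 1 \<Longrightarrow> br y \<le> br x2"
    using continuous_attains_sup[of "cball (0::real^'q) 1" br] cont by auto
  define m where "m = br x1"
  define c where "c = max 1 (max 1 (br x2) / m)"
  have m: "m > 0" using pos m_def by auto
  have "max 1 (br x2) / m \<le> c" unfolding c_def by simp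
  hence "max 1 (br x2) \<le> c * m" using m by (simp add: divide_le_eq)
  moreover have "c \<ge> 1" unfolding c_def by simp
  ultimately have c: "c \<ge> 1" "max 1 (br x2) \<le> c * m" by auto
  have "h * br \<eta> \<le> c * br (h *\<^sub>R \<eta>)" if h: "0 < h" "h \<le> 1" for h \<eta>
  proof (cases "norm (h *\<^sub>R \<eta>) \<ge> 1")
    case True
    hence "norm \<eta> \<ge> 1"
      using h mult_left_le_one_le[of "norm \<eta>" h] by simp
    hence "h * br \<eta> = br (h *\<^sub>R \<eta>)" using big[OF True] big h by simp
    thus ?thesis using c pos[of "h *\<^sub>R \<eta>"] by simp
  next
    case False
    have "h * br \<eta> \<le> max 1 (br x2)"
    proof (cases "norm \<eta> \<ge> 1")
      case True
      thus ?thesis using big False h by simp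
    next
      case small: False
      have "h * br \<eta> \<le> br \<eta>" using h pos[of \<eta>] by (intro mult_left_le_one_le) auto
      thus ?thesis using x2(2)[of \<eta>] small by simp
    qed
    also have "\<dots> \<le> c * m" by (rule c)
    also have "\<dots> \<le> c * br (h *\<^sub>R \<eta>)" using x1(2)[of "h *\<^sub>R \<eta>"] False c by (simp add: m_def)
    finally show ?thesis .
  qed
  thus ?thesis using c that by blast
qed

lemma sym_est_rescale:
  fixes br :: "real^'q::finite \<Rightarrow> real" and b :: "(real^'q) \<times> (real^'q) \<Rightarrow> 'h::real_normed_vector \<Rightarrow>\<^sub>L 'h"
  assumes M: "L2_model U" and br: "bracket_fun br"
    and c: "c \<ge> 1" "\<And>h \<eta>. 0 < h \<Longrightarrow> h \<le> 1 \<Longrightarrow> h * br \<eta> \<le> c * br (h *\<^sub>R \<eta>)"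
    and h: "0 < h" "h \<le> 1" and b: "smooth_fun b" and est: "sym_est U br 0 al be b C"
  shows "sym_est U br 0 al be (rescale U h b) (c ^ length al * C)"
  unfolding sym_est_def
proof (intro allI)
  fix y \<eta>
  define k where "k = length al"
  define B where "B = br \<eta>"
  define B' where "B' = br (h *\<^sub>R \<eta>)"
  define D where "D = Dsym al be b (y, h *\<^sub>R \<eta>)"
  have B: "B > 0" "B' > 0" using br unfolding B_def B'_def bracket_fun_def by auto
  have estD: "B' ^ k * norm (dilation_conj U B' D) \<le> C"
    using est[unfolded sym_est_def, rule_format, of "h *\<^sub>R \<eta>" y] B
    unfolding D_def B'_def k_def dilation_conj_def by (simp add: powr_realpow)
  \<comment> \<open>conjugation by \<kappa>_(hB) is conjugation by \<kappa>_B' followed by the isometric one by \<kappa>_(hB/B')\<close>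
  have "norm (dilation_conj U B (Dsym al be (rescale U h b) (y, \<eta>)))
      = h ^ k * norm (dilation_conj U (h * B / B') (dilation_conj U B' D))"
    using B h by (simp add: Dsym_rescale[OF b] linear_simps[OF bounded_linear_dilation_conj]
        dilation_conj_dilation_conj[OF M] D_def k_def)
  also have "\<dots> \<le> h ^ k * norm (dilation_conj U B' D)"
    using B h by (intro mult_left_mono norm_dilation_conj_le[OF M]) auto
  finally have "B ^ k * norm (dilation_conj U B (Dsym al be (rescale U h b) (y, \<eta>)))
      \<le> (h * B) ^ k * norm (dilation_conj U B' D)"
    using B by (simp add: power_mult_distrib mult_left_mono mult.assoc mult.left_commute)
  also have "\<dots> \<le> (c * B') ^ k * norm (dilation_conj U B' D)"
    using c h B unfolding B_def B'_def by (intro mult_right_mono power_mono) auto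
  also have "\<dots> \<le> c ^ k * C"
    using estD c by (simp add: power_mult_distrib mult.assoc mult_left_mono)
  finally show "br \<eta> powr (real (length al) - 0) *
      norm (kappaL U (1 / br \<eta>) o\<^sub>L Dsym al be (rescale U h b) (y, \<eta>) o\<^sub>L kappaL U (br \<eta>))
      \<le> c ^ length al * C"
    using B unfolding B_def k_def dilation_conj_def by (simp add: powr_realpow)
qed

lemma symbol_class_rescale:
  assumes M: "L2_model U" and br: "bracket_fun br" and h: "h \<in> {0<..1}" and b: "symbol_class U br 0 b"
  shows "symbol_class U br 0 (rescale U h b)"
proof -
  obtain c where c: "c \<ge> 1" "\<And>h \<eta>. 0 < h \<Longrightarrow> h \<le> 1 \<Longrightarrow> h * br \<eta> \<le> c * br (h *\<^sub>R \<eta>)"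
    using bracket_fun_scale_bound[OF br] by blast
  show ?thesis
    using b h sym_est_rescale[OF M br c] smooth_fun_rescale unfolding symbol_class_def by fastforce
qed

theorem lemma2p17:
  fixes U :: "'h::real_normed_vector \<Rightarrow> real \<Rightarrow> complex"
    and br :: "real^'q::finite \<Rightarrow> real"
    and a :: "real \<Rightarrow> (real^'q) \<times> (real^'q) \<Rightarrow> 'h \<Rightarrow>\<^sub>L 'h"
  assumes "L2_model U"
    and "bracket_fun br"
    and "bounded_family U br 0 a"
  shows "bounded_family U br 0 (\<lambda>h. rescale U h (a h))
    \<and> (\<forall>al be :: 'q list. \<exists>K N. \<forall>(b :: (real^'q) \<times> (real^'q) \<Rightarrow> 'h \<Rightarrow>\<^sub>L 'h) C h.
          h \<in> {0<..1} \<longrightarrow> symbol_class U br 0 b \<longrightarrow>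
          (\<forall>al' be' :: 'q list. length al' + length be' \<le> N \<longrightarrow> sym_est U br 0 al' be' b C) \<longrightarrow>
          sym_est U br 0 al be (rescale U h b) (K * C))"
proof -
  note M = assms(1) and br = assms(2) and a = assms(3)[unfolded bounded_family_def]
  obtain c where c: "c \<ge> 1" "\<And>h \<eta>. 0 < h \<Longrightarrow> h \<le> 1 \<Longrightarrow> h * br \<eta> \<le> c * br (h *\<^sub>R \<eta>)"
    using bracket_fun_scale_bound[OF br] by blast
  have est: "sym_est U br 0 al be (rescale U h b) (c ^ length al * C)"
    if "h \<in> {0<..1}" "symbol_class U br 0 b" "sym_est U br 0 al be b C"
    for h and b :: "(real^'q) \<times> (real^'q) \<Rightarrow> 'h \<Rightarrow>\<^sub>L 'h" and C al be
    using that sym_est_rescale[OF M br c] by (auto simp: symbol_class_def)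
  have "bounded_family U br 0 (\<lambda>h. rescale U h (a h))"
    unfolding bounded_family_def
  proof (intro conjI ballI allI)
    show "symbol_class U br 0 (rescale U h (a h))" if "h \<in> {0<..1}" for h
      using that a symbol_class_rescale[OF M br] by blast
    fix al be :: "'q list"
    obtain C where "\<forall>h\<in>{0<..1}. sym_est U br 0 al be (a h) C" using a by blast
    thus "\<exists>C. \<forall>h\<in>{0<..1}. sym_est U br 0 al be (rescale U h (a h)) C" using a est by blast
  qed
  moreover have "\<exists>K N. \<forall>(b :: (real^'q) \<times> (real^'q) \<Rightarrow> 'h \<Rightarrow>\<^sub>L 'h) C h.
          h \<in> {0<..1} \<longrightarrow> symbol_class U br 0 b \<longrightarrow>
          (\<forall>al' be' :: 'q list. length al' + length be' \<le> N \<longrightarrow> sym_est U br 0 al' be' b C) \<longrightarrow>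
          sym_est U br 0 al be (rescale U h b) (K * C)" for al be :: "'q list"
    using est by (intro exI[of _ "c ^ length al"] exI[of _ "length al + length be"]) auto
  ultimately show ?thesis by blast
qed

end
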